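(* Let $G$ be a graph with a linear order $<$ on $V(G)$ satisfying the X-property, and let $s<t$ be vertices with $d^*:=\operatorname{dist}(s,t)<\infty$. Then there is a shortest $s$-$t$ path $P=p_0,p_1,\dots,p_{d^*}$ (with $p_0=s$, $p_{d^*}=t$) such that (i) $p_i\in\{\alpha_s(i),\beta_s(i)\}$ for all $i<\operatorname{righti}(P)$, and (ii) $p_i\in\{\alpha_t(d^*-i),\beta_t(d^*-i)\}$ for all $i>\operatorname{lefti}(P)$.
   Context: The X-property: for all vertices $p<q<r<s$, if $\{p,r\}\in E(G)$ and $\{q,s\}\in E(G)$ then $\{p,s\}\in E(G)$. $\operatorname{dist}$ is the number of edges of a shortest path. $\operatorname{lefti}(P)$ / $\operatorname{righti}(P)$ is the index of the leftmost / rightmost vertex of $P$ w.r.t. $<$. For an integer $k\ge 0$: $\alpha_s(k)$ (resp. $\beta_s(k)$) is the leftmost (resp. rightmost) vertex reachable from $s$ by a path of length at most $k$ using only vertices $v\le t$; $\alpha_t(k)$ (resp. $\beta_t(k)$) is the rightmost (resp. leftmost) vertex reachable from $t$ by a path of length at most $k$ using only vertices $v\ge s$. *)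

theory Defs
  imports Main
begin

definition simple_graph :: "'a set \<Rightarrow> ('a \<Rightarrow> 'a \<Rightarrow> bool) \<Rightarrow> bool" where
  "simple_graph V E \<longleftrightarrow> finite V \<and> (\<forall>u v. E u v \<longrightarrow> u \<in> V \<and> v \<in> V)
     \<and> (\<forall>u v. E u v \<longrightarrow> E v u) \<and> (\<forall>u. \<not> E u u)"

definition X_property :: "'a::linorder set \<Rightarrow> ('a \<Rightarrow> 'a \<Rightarrow> bool) \<Rightarrow> bool" where
  "X_property V E \<longleftrightarrow> (\<forall>p\<in>V. \<forall>q\<in>V. \<forall>r\<in>V. \<forall>s\<in>V.
      p < q \<and> q < r \<and> r < s \<and> E p r \<and> E q s \<longrightarrow> E p s)"

text \<open>A walk is a nonempty vertex list with consecutive vertices adjacent; its length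
  is the number of edges, i.e. length minus one.\<close>
definition walk :: "'a set \<Rightarrow> ('a \<Rightarrow> 'a \<Rightarrow> bool) \<Rightarrow> 'a list \<Rightarrow> bool" where
  "walk V E xs \<longleftrightarrow> xs \<noteq> [] \<and> set xs \<subseteq> V \<and>
     (\<forall>i. Suc i < length xs \<longrightarrow> E (xs ! i) (xs ! Suc i))"

definition walk_from_to :: "'a set \<Rightarrow> ('a \<Rightarrow> 'a \<Rightarrow> bool) \<Rightarrow> 'a \<Rightarrow> 'a \<Rightarrow> 'a list \<Rightarrow> bool" where
  "walk_from_to V E u v xs \<longleftrightarrow> walk V E xs \<and> hd xs = u \<and> last xs = v"

text \<open>Distance (number of edges of a shortest path); meaningful when a walk exists.\<close>
definition dist :: "'a set \<Rightarrow> ('a \<Rightarrow> 'a \<Rightarrow> bool) \<Rightarrow> 'a \<Rightarrow> 'a \<Rightarrow> nat" where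
  "dist V E u v = (LEAST n. \<exists>xs. walk_from_to V E u v xs \<and> length xs = Suc n)"

definition reach_within :: "'a set \<Rightarrow> ('a \<Rightarrow> 'a \<Rightarrow> bool) \<Rightarrow> 'a set \<Rightarrow> 'a \<Rightarrow> nat \<Rightarrow> 'a set" where
  "reach_within V E W u k = {v. \<exists>xs. walk_from_to V E u v xs \<and> length xs \<le> Suc k \<and> set xs \<subseteq> W}"

definition alpha_s :: "'a::linorder set \<Rightarrow> ('a \<Rightarrow> 'a \<Rightarrow> bool) \<Rightarrow> 'a \<Rightarrow> 'a \<Rightarrow> nat \<Rightarrow> 'a" where
  "alpha_s V E s t k = Min (reach_within V E {v. v \<le> t} s k)"

definition beta_s :: "'a::linorder set \<Rightarrow> ('a \<Rightarrow> 'a \<Rightarrow> bool) \<Rightarrow> 'a \<Rightarrow> 'a \<Rightarrow> nat \<Rightarrow> 'a" where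
  "beta_s V E s t k = Max (reach_within V E {v. v \<le> t} s k)"

definition alpha_t :: "'a::linorder set \<Rightarrow> ('a \<Rightarrow> 'a \<Rightarrow> bool) \<Rightarrow> 'a \<Rightarrow> 'a \<Rightarrow> nat \<Rightarrow> 'a" where
  "alpha_t V E s t k = Max (reach_within V E {v. s \<le> v} t k)"

definition beta_t :: "'a::linorder set \<Rightarrow> ('a \<Rightarrow> 'a \<Rightarrow> bool) \<Rightarrow> 'a \<Rightarrow> 'a \<Rightarrow> nat \<Rightarrow> 'a" where
  "beta_t V E s t k = Min (reach_within V E {v. s \<le> v} t k)"

definition lefti :: "'a::linorder list \<Rightarrow> nat" where
  "lefti P = (LEAST i. i < length P \<and> P ! i = Min (set P))"

definition righti :: "'a::linorder list \<Rightarrow> nat" where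
  "righti P = (LEAST i. i < length P \<and> P ! i = Max (set P))"

end

theory Submission
  imports Defs "HOL-Library.Dual_Ordered_Lattice"
begin

text \<open>
  Fix a shortest \<open>s\<close>-\<open>t\<close> path \<open>P\<close> whose leftmost vertex is as small as possible and,
  among those, whose rightmost vertex is as large as possible; let \<open>l\<close> and \<open>m\<close> be their
  positions. All local arguments have one shape: when a walk from \<open>s\<close>, or \<open>P\<close> itself,
  steps from outside into the open interval spanned by an edge of \<open>P\<close> (or conversely), the
  X-property yields an edge from the outer vertex to an endpoint of the spanning edge, which
  contradicts the distances along \<open>P\<close> or pins down the indices involved. This shows that
  \<open>P\<close> stays below \<open>t\<close> before \<open>m\<close>, that \<open>P!i = \<beta>\<^sub>s(i)\<close> for \<open>l < i < m\<close>, and, if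
  \<open>l < m\<close>, that \<open>P!l = \<alpha>\<^sub>s(l)\<close>, since otherwise a walk realising \<open>\<alpha>\<^sub>s(l)\<close> would
  give a shortest path with a smaller leftmost vertex and the same rightmost one.

  The part of \<open>P\<close> before \<open>min l m\<close> is then replaced backwards, one vertex at a time: if
  \<open>P!(k+1)\<close> lies outside the range of the ball of radius \<open>k\<close> around \<open>s\<close> (below \<open>t\<close>), then
  \<open>P!(k+1)\<close> is adjacent to the minimum or the maximum of that ball, and a walk to that
  extreme of length \<open>k\<close> can be spliced in. The new path has the same extremes, so it is
  still extremal. The condition at \<open>t\<close> is the mirror image, obtained by reversing both the
  order (type \<open>'a dual\<close>) and the path; the corresponding rebuilding only touches positions
  after \<open>max l m\<close> and hence keeps the condition at \<open>s\<close>.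
\<close>

instance dual :: (linorder) linorder
  by standard (simp add: dual_less_eq_iff linear)

lemma exists_crossing_step:
  fixes g :: "nat \<Rightarrow> 'b"
  assumes "Q (g a)" "\<not> Q (g b)" "a \<le> b"
  shows "\<exists>j. a \<le> j \<and> j < b \<and> Q (g j) \<and> \<not> Q (g (Suc j))"
  using assms
proof (induction b)
  case 0
  then show ?case by simp
next
  case (Suc b)
  show ?case
  proof (cases "Q (g b)")
    case True
    then show ?thesis using Suc.prems by (intro exI[of _ b]) (auto simp: le_Suc_eq)
  next
    case False
    then have "a \<le> b" using Suc.prems by (auto simp: le_Suc_eq)
    then show ?thesis using Suc.IH[OF Suc.prems(1) False] by (auto intro: less_SucI)
  qed
qed

lemma nth_eq_if_drop_eq:
  assumes "drop n xs = drop n ys" "n \<le> i" "i < length xs"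
  shows "xs ! i = ys ! i"
proof -
  have "drop n xs \<noteq> []" using assms(2,3) by simp
  then have "n \<le> length ys" using assms(1) by simp
  then show ?thesis using assms nth_drop[of n xs "i - n"] nth_drop[of n ys "i - n"] by simp
qed

lemma nth_eq_if_take_eq: "take n xs = take n ys \<Longrightarrow> i < n \<Longrightarrow> xs ! i = ys ! i"
  by (metis nth_take)

section \<open>Walks and balls\<close>

lemma walk_edge: "walk V E xs \<Longrightarrow> Suc i < length xs \<Longrightarrow> E (xs ! i) (xs ! Suc i)"
  unfolding walk_def by auto

lemma walk_take: "walk V E xs \<Longrightarrow> 0 < n \<Longrightarrow> walk V E (take n xs)"
  unfolding walk_def by (auto dest: in_set_takeD)

lemma walk_drop: "walk V E xs \<Longrightarrow> n < length xs \<Longrightarrow> walk V E (drop n xs)"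
  unfolding walk_def by (auto dest: in_set_dropD)

lemma walk_append:
  assumes "walk V E xs" "walk V E ys" "E (last xs) (hd ys)"
  shows "walk V E (xs @ ys)"
  unfolding walk_def
proof (intro conjI allI impI)
  show "xs @ ys \<noteq> []" "set (xs @ ys) \<subseteq> V" using assms(1,2) by (auto simp: walk_def)
  fix i assume i: "Suc i < length (xs @ ys)"
  have ne: "xs \<noteq> []" "ys \<noteq> []" using assms(1,2) by (auto simp: walk_def)
  consider "Suc i < length xs" | "Suc i = length xs" | "length xs < Suc i" by linarith
  then show "E ((xs @ ys) ! i) ((xs @ ys) ! Suc i)"
  proof cases
    case 1
    then show ?thesis using assms(1) by (simp add: nth_append walk_def)
  next
    case 2
    then have "i = length xs - 1" by simp
    then show ?thesis using assms(3) ne 2 by (simp add: nth_append last_conv_nth hd_conv_nth)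
  next
    case 3
    then have "Suc (i - length xs) < length ys" "Suc i - length xs = Suc (i - length xs)"
      using i by auto
    then show ?thesis using assms(2) 3 by (simp add: nth_append walk_def)
  qed
qed

lemma walk_rev:
  assumes sym: "\<And>u v. E u v \<Longrightarrow> E v u" and w: "walk V E xs"
  shows "walk V E (rev xs)"
  unfolding walk_def
proof (intro conjI allI impI)
  show "rev xs \<noteq> []" "set (rev xs) \<subseteq> V" using w by (auto simp: walk_def)
  fix i assume i: "Suc i < length (rev xs)"
  let ?j = "length xs - Suc (Suc i)"
  have "E (xs ! ?j) (xs ! Suc ?j)" using walk_edge[OF w, of ?j] i by simp
  moreover have "Suc ?j = length xs - Suc i" using i by simp
  ultimately show "E (rev xs ! i) (rev xs ! Suc i)" using i sym by (simp add: rev_nth)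
qed

lemma walk_from_to_nth_iff:
  "walk_from_to V E u v xs \<longleftrightarrow> walk V E xs \<and> xs ! 0 = u \<and> xs ! (length xs - 1) = v"
  unfolding walk_from_to_def walk_def by (auto simp: hd_conv_nth last_conv_nth)

lemma walk_from_to_nthD:
  assumes "walk_from_to V E x y xs"
  shows "walk V E xs" "0 < length xs" "xs ! 0 = x" "xs ! (length xs - 1) = y"
  using assms by (auto simp: walk_from_to_nth_iff walk_def)

lemma walk_from_to_singleton: "x \<in> V \<Longrightarrow> walk_from_to V E x x [x]"
  by (simp add: walk_from_to_def walk_def)

lemma walk_from_to_take:
  assumes "walk V E xs" "i < length xs"
  shows "walk_from_to V E (xs ! 0) (xs ! i) (take (Suc i) xs)"
  using assms walk_take[of V E xs "Suc i"] by (simp add: walk_from_to_nth_iff min_absorb2)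

lemma walk_from_to_drop:
  assumes "walk V E xs" "i < length xs"
  shows "walk_from_to V E (xs ! i) (xs ! (length xs - 1)) (drop i xs)"
  using assms walk_drop[of V E xs i] by (simp add: walk_from_to_nth_iff)

lemma walk_from_to_append_edge:
  assumes "walk_from_to V E x y xs" "walk_from_to V E y' z ys" "E y y'"
  shows "walk_from_to V E x z (xs @ ys)"
  using assms walk_append[of V E xs ys] unfolding walk_from_to_def walk_def by auto

lemma walk_from_to_append:
  assumes "walk_from_to V E x y xs" "walk_from_to V E y z ys"
  shows "walk_from_to V E x z (xs @ tl ys)"
proof (cases "tl ys")
  case Nil
  then have "ys = [y]" using assms(2) by (cases ys) (auto simp: walk_from_to_def walk_def)
  then show ?thesis using assms by (auto simp: walk_from_to_def)
next
  case (Cons y' ys')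
  have ys: "ys = y # y' # ys'" using assms(2) Cons by (cases ys) (auto simp: walk_from_to_def)
  then have "E y y'" using walk_edge[of V E ys 0] assms(2) by (simp add: walk_from_to_def)
  moreover have "walk_from_to V E y' z (tl ys)"
    using assms(2) walk_drop[of V E ys 1] ys by (auto simp: walk_from_to_def)
  ultimately show ?thesis using assms(1) walk_from_to_append_edge by fast
qed

lemma walk_from_to_rev:
  assumes "\<And>u v. E u v \<Longrightarrow> E v u" "walk_from_to V E x y xs"
  shows "walk_from_to V E y x (rev xs)"
  using assms walk_rev[of E V xs] by (auto simp: walk_from_to_def hd_rev last_rev)

lemma walk_nth_in_reach_within:
  assumes "walk_from_to V E x w W" "set W \<subseteq> S" "j < length W" "j \<le> k"
  shows "W ! j \<in> reach_within V E S x k"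
  unfolding reach_within_def
proof (intro CollectI exI conjI)
  show "walk_from_to V E x (W ! j) (take (Suc j) W)"
    using assms walk_from_to_take[of V E W j] by (simp add: walk_from_to_nth_iff)
  show "set (take (Suc j) W) \<subseteq> S" using assms(2) by (meson order_trans set_take_subset)
qed (use assms(4) in simp)

lemma reach_within_edge:
  assumes "u \<in> reach_within V E S x k" "E u v" "v \<in> V" "v \<in> S"
  shows "v \<in> reach_within V E S x (Suc k)"
proof -
  obtain W where "walk_from_to V E x u W" "length W \<le> Suc k" "set W \<subseteq> S"
    using assms(1) unfolding reach_within_def by blast
  moreover have "walk_from_to V E v v [v]" using assms(3) by (rule walk_from_to_singleton)
  ultimately show ?thesis
    using assms walk_from_to_append_edge[of V E x u W v v "[v]"]
    unfolding reach_within_def by (intro CollectI exI[of _ "W @ [v]"]) auto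
qed

lemma reach_within_mono:
  "k \<le> k' \<Longrightarrow> S \<subseteq> S' \<Longrightarrow> reach_within V E S x k \<subseteq> reach_within V E S' x k'"
  unfolding reach_within_def by fastforce

lemma reach_within_subset: "reach_within V E S x k \<subseteq> S \<inter> V"
  unfolding reach_within_def walk_from_to_def walk_def by (auto dest: last_in_set)

lemma start_in_reach_within: "x \<in> V \<Longrightarrow> x \<in> S \<Longrightarrow> x \<in> reach_within V E S x k"
  unfolding reach_within_def using walk_from_to_singleton by fastforce

lemma righti_less_length_nth:
  assumes "xs \<noteq> []"
  shows "righti xs < length xs" "xs ! righti xs = Max (set xs)"
proof -
  obtain i where "i < length xs" "xs ! i = Max (set xs)"
    using assms by (metis Max_in List.finite_set in_set_conv_nth set_empty)
  then show "righti xs < length xs" "xs ! righti xs = Max (set xs)"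
    unfolding righti_def by (metis (mono_tags, lifting) LeastI)+
qed

lemma lefti_less_length_nth:
  assumes "xs \<noteq> []"
  shows "lefti xs < length xs" "xs ! lefti xs = Min (set xs)"
proof -
  obtain i where "i < length xs" "xs ! i = Min (set xs)"
    using assms by (metis Min_in List.finite_set in_set_conv_nth set_empty)
  then show "lefti xs < length xs" "xs ! lefti xs = Min (set xs)"
    unfolding lefti_def by (metis (mono_tags, lifting) LeastI)+
qed

lemma righti_eqI:
  assumes "distinct xs" "i < length xs" "xs ! i = Max (set xs)"
  shows "righti xs = i"
  using assms nth_eq_iff_index_eq[OF assms(1)] righti_less_length_nth[of xs] by force

lemma lefti_eqI:
  assumes "distinct xs" "i < length xs" "xs ! i = Min (set xs)"
  shows "lefti xs = i"
  using assms nth_eq_iff_index_eq[OF assms(1)] lefti_less_length_nth[of xs] by force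

section \<open>Reversing the order\<close>

definition dual_adj :: "('a \<Rightarrow> 'a \<Rightarrow> bool) \<Rightarrow> 'a dual \<Rightarrow> 'a dual \<Rightarrow> bool" where
  "dual_adj E u v = E (undual u) (undual v)"

lemma mem_dual_image_iff: "x \<in> dual ` V \<longleftrightarrow> undual x \<in> V"
  by (metis dual_undual image_iff undual_dual)

lemma map_dual_undual: "map dual (map undual xs) = xs"
  by (induction xs) auto

lemma map_undual_dual: "map undual (map dual xs) = xs"
  by (induction xs) auto

lemma walk_dual_iff: "walk (dual ` V) (dual_adj E) xs \<longleftrightarrow> walk V E (map undual xs)"
  unfolding walk_def dual_adj_def by (auto simp: mem_dual_image_iff)

lemma walk_from_to_dual_iff:
  "walk_from_to (dual ` V) (dual_adj E) x y xs \<longleftrightarrow>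
     walk_from_to V E (undual x) (undual y) (map undual xs)"
  unfolding walk_from_to_def walk_dual_iff by (auto simp: walk_def hd_map last_map dual_eq_iff)

lemma reach_within_dual:
  "reach_within (dual ` V) (dual_adj E) (dual ` S) (dual x) k = dual ` reach_within V E S x k"
proof -
  have "reach_within (dual ` V) (dual_adj E) (dual ` S) (dual x) k \<subseteq> dual ` reach_within V E S x k"
  proof
    fix v assume "v \<in> reach_within (dual ` V) (dual_adj E) (dual ` S) (dual x) k"
    then obtain xs where "walk_from_to V E x (undual v) (map undual xs)" "length xs \<le> Suc k"
      "set xs \<subseteq> dual ` S"
      unfolding reach_within_def walk_from_to_dual_iff by auto
    moreover have "set (map undual xs) \<subseteq> S"
      using \<open>set xs \<subseteq> dual ` S\<close> by (auto simp: mem_dual_image_iff)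
    ultimately have "undual v \<in> reach_within V E S x k" unfolding reach_within_def by force
    then show "v \<in> dual ` reach_within V E S x k" by (metis dual_undual imageI)
  qed
  moreover have "dual ` reach_within V E S x k \<subseteq> reach_within (dual ` V) (dual_adj E) (dual ` S) (dual x) k"
  proof
    fix v assume "v \<in> dual ` reach_within V E S x k"
    then obtain xs where "walk_from_to V E x (undual v) xs" "length xs \<le> Suc k" "set xs \<subseteq> S"
      unfolding reach_within_def by auto
    then show "v \<in> reach_within (dual ` V) (dual_adj E) (dual ` S) (dual x) k"
      unfolding reach_within_def walk_from_to_dual_iff
      by (intro CollectI exI[of _ "map dual xs"]) (auto simp: map_undual_dual)
  qed
  ultimately show ?thesis by blast
qed

lemma Min_dual_image: "finite S \<Longrightarrow> S \<noteq> {} \<Longrightarrow> Min (dual ` S) = dual (Max S)"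
  by (intro Min_eqI) (auto simp: dual_less_eq_iff)

lemma Max_dual_image: "finite S \<Longrightarrow> S \<noteq> {} \<Longrightarrow> Max (dual ` S) = dual (Min S)"
  by (intro Max_eqI) (auto simp: dual_less_eq_iff)

lemma simple_graph_dual: "simple_graph V E \<Longrightarrow> simple_graph (dual ` V) (dual_adj E)"
  unfolding simple_graph_def dual_adj_def by (auto simp: mem_dual_image_iff)

lemma X_property_dual:
  assumes "simple_graph V E" "X_property V E"
  shows "X_property (dual ` V) (dual_adj E)"
  unfolding X_property_def dual_adj_def
proof (intro ballI impI)
  fix p q r s :: "'a dual"
  assume V: "p \<in> dual ` V" "q \<in> dual ` V" "r \<in> dual ` V" "s \<in> dual ` V"
    and h: "p < q \<and> q < r \<and> r < s \<and> E (undual p) (undual r) \<and> E (undual q) (undual s)"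
  have sym: "\<And>u v. E u v \<Longrightarrow> E v u" using assms(1) by (simp add: simple_graph_def)
  have "E (undual s) (undual p)"
    using assms(2) V h sym unfolding X_property_def mem_dual_image_iff
    by (meson dual_less_iff)
  then show "E (undual p) (undual s)" using sym by blast
qed

lemma walk_from_to_dual_rev_iff:
  assumes "\<And>u v. E u v \<Longrightarrow> E v u"
  shows "walk_from_to (dual ` V) (dual_adj E) (dual t) (dual s) (map dual (rev xs)) \<longleftrightarrow>
    walk_from_to V E s t xs"
  using walk_from_to_rev[where E = E, OF assms, where V = V and x = t and y = s and xs = "rev xs"]
    walk_from_to_rev[where E = E, OF assms, where V = V and x = s and y = t and xs = xs]
  by (auto simp: walk_from_to_dual_iff map_undual_dual)

lemma dual_rev_undual: "map dual (rev (rev (map undual ys))) = ys"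
  by (simp add: map_dual_undual)

lemma dist_dual_rev:
  assumes "\<And>u v. E u v \<Longrightarrow> E v u"
  shows "dist (dual ` V) (dual_adj E) (dual t) (dual s) = dist V E s t"
  unfolding dist_def
proof (intro arg_cong[where f = Least] ext iffI)
  fix n
  assume "\<exists>ys. walk_from_to (dual ` V) (dual_adj E) (dual t) (dual s) ys \<and> length ys = Suc n"
  then obtain ys where "walk_from_to (dual ` V) (dual_adj E) (dual t) (dual s) ys" "length ys = Suc n"
    by blast
  then show "\<exists>xs. walk_from_to V E s t xs \<and> length xs = Suc n"
    using walk_from_to_dual_rev_iff[where E = E, OF assms, where V = V and t = t and s = s
        and xs = "rev (map undual ys)"]
    by (intro exI[of _ "rev (map undual ys)"]) (simp add: dual_rev_undual)
next
  fix n
  assume "\<exists>xs. walk_from_to V E s t xs \<and> length xs = Suc n"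
  then show "\<exists>ys. walk_from_to (dual ` V) (dual_adj E) (dual t) (dual s) ys \<and> length ys = Suc n"
    using walk_from_to_dual_rev_iff[where E = E, OF assms, where V = V and t = t and s = s] by force
qed

lemma righti_dual_rev:
  assumes "distinct xs" "xs \<noteq> []"
  shows "righti (map dual (rev xs)) = length xs - 1 - lefti xs"
proof (rule righti_eqI)
  note l = lefti_less_length_nth[OF assms(2)]
  show "distinct (map dual (rev xs))" using assms by (simp add: distinct_map inj_on_def)
  show "length xs - 1 - lefti xs < length (map dual (rev xs))" using l by simp
  show "map dual (rev xs) ! (length xs - 1 - lefti xs) = Max (set (map dual (rev xs)))"
    using l assms by (simp add: rev_nth Max_dual_image)
qed

lemma lefti_dual_rev:
  assumes "distinct xs" "xs \<noteq> []"
  shows "lefti (map dual (rev xs)) = length xs - 1 - righti xs"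
proof (rule lefti_eqI)
  note r = righti_less_length_nth[OF assms(2)]
  show "distinct (map dual (rev xs))" using assms by (simp add: distinct_map inj_on_def)
  show "length xs - 1 - righti xs < length (map dual (rev xs))" using r by simp
  show "map dual (rev xs) ! (length xs - 1 - righti xs) = Min (set (map dual (rev xs)))"
    using r assms by (simp add: rev_nth Min_dual_image)
qed

section \<open>Graphs with the X-property\<close>

locale X_graph =
  fixes V :: "'a::linorder set" and E :: "'a \<Rightarrow> 'a \<Rightarrow> bool"
  assumes simple: "simple_graph V E" and X: "X_property V E"
begin

lemma sym: "E u v \<Longrightarrow> E v u"
  using simple by (simp add: simple_graph_def)

lemma edge_in_V: "E u v \<Longrightarrow> u \<in> V \<and> v \<in> V"
  using simple by (simp add: simple_graph_def)

lemma finite_V: "finite V"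
  using simple by (simp add: simple_graph_def)

lemma finite_reach_within: "finite (reach_within V E S x k)"
  using finite_subset[OF _ finite_V] reach_within_subset[of V E S x k] by blast

lemma crossing_edge_above:
  assumes "y < u" "u < x" "E y x" "E u z" "x < z"
  shows "E y z"
proof -
  have "y \<in> V" "u \<in> V" "x \<in> V" "z \<in> V" using edge_in_V assms(3,4) by auto
  then show ?thesis using X assms unfolding X_property_def by blast
qed

lemma crossing_edge_below:
  assumes "y < u" "u < x" "E y x" "E u z" "z < y"
  shows "E z x"
proof -
  have "z \<in> V" "y \<in> V" "u \<in> V" "x \<in> V" using edge_in_V assms(3,4) by auto
  moreover have "E z u" using assms(4) sym by blast
  ultimately show ?thesis using X assms unfolding X_property_def by blast
qed

lemma inner_walk_vertex_not_adjacent: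
  assumes far: "v \<notin> reach_within V E UNIV x k"
    and W: "walk_from_to V E x w W" "length W \<le> Suc k" and j: "Suc j < length W"
  shows "\<not> E (W ! j) v"
proof
  assume "E (W ! j) v"
  moreover have "W ! j \<in> reach_within V E UNIV x j"
    using walk_nth_in_reach_within[OF W(1)] j by auto
  ultimately have "v \<in> reach_within V E UNIV x (Suc j)"
    using reach_within_edge[of "W ! j" V E UNIV x j v] edge_in_V by blast
  moreover have "Suc j \<le> k" using j W(2) by simp
  ultimately show False using far reach_within_mono[of "Suc j" k UNIV UNIV V E x] by blast
qed

lemma far_neighbour_not_above_start:
  fixes S x k
  defines "R \<equiv> reach_within V E S x k"
  assumes u: "u \<in> R" "x < u" "u < Max R" and uv: "E u v" "Max R < v"
    and far: "v \<notin> reach_within V E UNIV x k"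
  shows False
proof -
  have fin: "finite R" unfolding R_def by (rule finite_reach_within)
  then have bR: "Max R \<in> R" using u(1) by (auto intro: Max_in)
  then obtain W where W: "walk_from_to V E x (Max R) W" "length W \<le> Suc k" "set W \<subseteq> S"
    unfolding R_def reach_within_def by blast
  note w = walk_from_to_nthD[OF W(1)]
  have "W ! 0 < u" "\<not> W ! (length W - 1) < u" using w u by auto
  then obtain j where j: "j < length W - 1" "W ! j < u" "\<not> W ! Suc j < u"
    using exists_crossing_step[where g = "(!) W" and Q = "\<lambda>y. y < u" and a = 0] by auto
  have "W ! Suc j \<in> R" using walk_nth_in_reach_within[OF W(1,3), of "Suc j" k] W(2) j(1)
    unfolding R_def by simp
  then have "W ! Suc j < v" using fin uv(2) by (meson Max_ge le_less_trans)
  show False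
  proof (cases "W ! Suc j = u")
    case True
    then have "Suc j \<noteq> length W - 1" using w(4) u(3) by auto
    then have "Suc (Suc j) < length W" using j(1) by linarith
    then show False using inner_walk_vertex_not_adjacent[OF far W(1,2)] True uv(1) by blast
  next
    case False
    then have "u < W ! Suc j" using j(3) by simp
    moreover have "E (W ! j) (W ! Suc j)" using walk_edge[OF w(1)] j(1) by simp
    ultimately have "E (W ! j) v" using crossing_edge_above[OF j(2) _ _ uv(1) \<open>W ! Suc j < v\<close>] by blast
    then show False using inner_walk_vertex_not_adjacent[OF far W(1,2)] j(1) by simp
  qed
qed

lemma far_neighbour_below_start:
  fixes S x k
  defines "R \<equiv> reach_within V E S x k"
  assumes u: "u \<in> R" "Min R < u" "u < x" and uv: "E u v" "Max R < v"
    and far: "v \<notin> reach_within V E UNIV x k"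
  shows "E (Min R) v"
proof -
  have fin: "finite R" unfolding R_def by (rule finite_reach_within)
  then have "Min R \<in> R" using u(1) by (auto intro: Min_in)
  then obtain W where W: "walk_from_to V E x (Min R) W" "length W \<le> Suc k" "set W \<subseteq> S"
    unfolding R_def reach_within_def by blast
  note w = walk_from_to_nthD[OF W(1)]
  have "u < W ! 0" "\<not> u < W ! (length W - 1)" using w u by auto
  then obtain j where j: "j < length W - 1" "u < W ! j" "\<not> u < W ! Suc j"
    using exists_crossing_step[where g = "(!) W" and Q = "\<lambda>y. u < y" and a = 0] by auto
  have "W ! j \<in> R" using walk_nth_in_reach_within[OF W(1,3), of j k] W(2) j(1) unfolding R_def by simp
  then have "W ! j < v" using fin uv(2) by (meson Max_ge le_less_trans)
  have last: "Suc j = length W - 1 \<or> Suc (Suc j) < length W" using j(1) by linarith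
  show ?thesis
  proof (cases "W ! Suc j = u")
    case True
    then show ?thesis
      using inner_walk_vertex_not_adjacent[OF far W(1,2)] last w(4) u(2) uv(1) by auto
  next
    case False
    then have "W ! Suc j < u" using j(3) by simp
    moreover have "E (W ! Suc j) (W ! j)" using walk_edge[OF w(1)] sym j(1) by simp
    ultimately have "E (W ! Suc j) v" using crossing_edge_above j(2) uv(1) \<open>W ! j < v\<close> by blast
    then show ?thesis using inner_walk_vertex_not_adjacent[OF far W(1,2)] last w(4) by auto
  qed
qed

lemma adjacent_extreme_of_reach_within_above:
  fixes S x k
  defines "R \<equiv> reach_within V E S x k"
  assumes u: "u \<in> R" and uv: "E u v" and big: "Max R < v"
    and far: "v \<notin> reach_within V E UNIV x k"
  shows "E (Min R) v \<or> E (Max R) v"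
proof (rule ccontr)
  assume not_adj: "\<not> ?thesis"
  have fin: "finite R" unfolding R_def by (rule finite_reach_within)
  have "Min R \<le> u" "u \<le> Max R" "u \<noteq> Min R" "u \<noteq> Max R" using fin u not_adj uv by auto
  then have au: "Min R < u" and ub: "u < Max R" by auto
  consider "x < u" | "u < x" | "u = x" by fastforce
  then show False
  proof cases
    case 1
    show False
      using far_neighbour_not_above_start[OF u[unfolded R_def] 1 ub[unfolded R_def] uv
          big[unfolded R_def] far] .
  next
    case 2
    have "E (Min R) v"
      using far_neighbour_below_start[OF u[unfolded R_def] au[unfolded R_def] 2 uv
          big[unfolded R_def] far] unfolding R_def .
    then show False using not_adj by simp
  next
    case 3
    have "x \<in> reach_within V E UNIV x 0" using edge_in_V[OF uv] 3 by (simp add: start_in_reach_within)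
    then have "v \<in> reach_within V E UNIV x 1" using reach_within_edge edge_in_V uv 3 by fastforce
    then have "k = 0" using far reach_within_mono[of 1 k UNIV UNIV V E x] by (cases k) auto
    have "R \<subseteq> {x}"
    proof
      fix w assume "w \<in> R"
      then obtain W where "walk_from_to V E x w W" "length W \<le> 1"
        unfolding R_def reach_within_def \<open>k = 0\<close> by auto
      then show "w \<in> {x}" by (cases W) (auto simp: walk_from_to_def walk_def)
    qed
    moreover have "Min R \<in> R" using fin u by (auto intro: Min_in)
    ultimately show False using au 3 by auto
  qed
qed

lemma adjacent_extreme_of_reach_within:
  fixes S x k
  defines "R \<equiv> reach_within V E S x k"
  assumes u: "u \<in> R" and uv: "E u v" and outside: "v < Min R \<or> Max R < v"
    and far: "v \<notin> reach_within V E UNIV x k"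
  shows "E (Min R) v \<or> E (Max R) v"
  using outside
proof
  assume small: "v < Min R"
  interpret D: X_graph "dual ` V" "dual_adj E"
    using simple_graph_dual[OF simple] X_property_dual[OF simple X] by unfold_locales
  have fin: "finite R" and ne: "R \<noteq> {}" using u unfolding R_def by (auto intro: finite_reach_within)
  have R: "reach_within (dual ` V) (dual_adj E) (dual ` S) (dual x) k = dual ` R"
    unfolding R_def by (rule reach_within_dual)
  have "dual_adj E (Min (dual ` R)) (dual v) \<or> dual_adj E (Max (dual ` R)) (dual v)"
  proof (rule D.adjacent_extreme_of_reach_within_above[where S = "dual ` S" and x = "dual x" and k = k
        and u = "dual u" and v = "dual v", unfolded R])
    show "dual u \<in> dual ` R" "dual_adj E (dual u) (dual v)" using u uv by (auto simp: dual_adj_def)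
    show "Max (dual ` R) < dual v" using small fin ne by (simp add: Max_dual_image)
    show "dual v \<notin> reach_within (dual ` V) (dual_adj E) UNIV (dual x) k"
      using far reach_within_dual[of V E UNIV x k] by (auto simp: surj_dual dual_eq_iff)
  qed
  then show ?thesis using fin ne by (auto simp: Max_dual_image Min_dual_image dual_adj_def)
qed (use adjacent_extreme_of_reach_within_above[OF u[unfolded R_def] uv _ far] R_def in blast)

end

section \<open>Shortest paths\<close>

locale X_graph_st = X_graph +
  fixes s t :: "'a::linorder"
  assumes s_in_V: "s \<in> V" and t_in_V: "t \<in> V" and s_less_t: "s < t"
    and connected: "\<exists>xs. walk_from_to V E s t xs"
begin

abbreviation "d \<equiv> dist V E s t"

definition geodesic :: "'a list \<Rightarrow> bool" where
  "geodesic P \<longleftrightarrow> walk_from_to V E s t P \<and> length P = Suc d"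

abbreviation Rs :: "nat \<Rightarrow> 'a set" where
  "Rs k \<equiv> reach_within V E {v. v \<le> t} s k"

lemma dist_le_walk_length:
  assumes "walk_from_to V E s t A"
  shows "Suc d \<le> length A"
proof -
  have "0 < length A" using walk_from_to_nthD(2)[OF assms] .
  then have "\<exists>xs. walk_from_to V E s t xs \<and> length xs = Suc (length A - 1)" using assms by auto
  then have "d \<le> length A - 1" unfolding dist_def by (rule Least_le)
  then show ?thesis using \<open>0 < length A\<close> by linarith
qed

lemma geodesic_exists: "\<exists>P. geodesic P"
proof -
  obtain A where A: "walk_from_to V E s t A" using connected by blast
  then have "\<exists>n xs. walk_from_to V E s t xs \<and> length xs = Suc n"
    using walk_from_to_nthD(2)[OF A] by (intro exI[of _ "length A - 1"] exI[of _ A]) simp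
  then have "\<exists>xs. walk_from_to V E s t xs \<and> length xs = Suc d"
    unfolding dist_def by (rule LeastI_ex)
  then show ?thesis unfolding geodesic_def by blast
qed

lemma geodesicD:
  assumes "geodesic P"
  shows "walk V E P" "P ! 0 = s" "P ! d = t" "length P = Suc d"
  using assms walk_from_to_nthD[of V E s t P] by (auto simp: geodesic_def)

lemma geodesic_prefix_shortest:
  assumes "geodesic P" "f \<le> d" "walk_from_to V E s (P ! f) A"
  shows "f < length A"
proof -
  have "walk_from_to V E (P ! f) t (drop f P)"
    using walk_from_to_drop[of V E P f] geodesicD[OF assms(1)] assms(2) by simp
  then have "Suc d \<le> length (A @ tl (drop f P))"
    using walk_from_to_append[OF assms(3)] dist_le_walk_length by blast
  then show ?thesis using assms(2) geodesicD(4)[OF assms(1)] by simp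
qed

lemma geodesic_prefix_shortest_adjacent:
  assumes "geodesic P" "f \<le> d" "walk_from_to V E s u A" "E u (P ! f)"
  shows "f \<le> length A"
proof -
  have "walk_from_to V E (P ! f) t (drop f P)"
    using walk_from_to_drop[of V E P f] geodesicD[OF assms(1)] assms(2) by simp
  then have "Suc d \<le> length (A @ drop f P)"
    using walk_from_to_append_edge[OF assms(3) _ assms(4)] dist_le_walk_length by blast
  then show ?thesis using assms(2) geodesicD(4)[OF assms(1)] by simp
qed

lemma geodesic_walk_prefix:
  assumes "geodesic P" "i \<le> d"
  shows "walk_from_to V E s (P ! i) (take (Suc i) P)"
  using walk_from_to_take[of V E P i] geodesicD[OF assms(1)] assms(2) by simp

lemma geodesic_no_shortcut:
  assumes "geodesic P" "a \<le> d" "f \<le> d" "E (P ! a) (P ! f)"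
  shows "f \<le> Suc a"
  using geodesic_prefix_shortest_adjacent[OF assms(1,3) geodesic_walk_prefix[OF assms(1,2)] assms(4)]
    assms(2) geodesicD(4)[OF assms(1)] by simp

lemma geodesic_nth_notin_reach_within:
  assumes "geodesic P" "f \<le> d" "k < f"
  shows "P ! f \<notin> reach_within V E S s k"
proof
  assume "P ! f \<in> reach_within V E S s k"
  then obtain A where "walk_from_to V E s (P ! f) A" "length A \<le> Suc k"
    unfolding reach_within_def by blast
  then show False using geodesic_prefix_shortest[OF assms(1,2)] assms(3) by fastforce
qed

lemma geodesic_distinct:
  assumes "geodesic P"
  shows "distinct P"
proof (rule ccontr)
  assume "\<not> distinct P"
  then obtain i j where "i \<noteq> j" "i \<le> d" "j \<le> d" "P ! i = P ! j"
    using geodesicD(4)[OF assms] by (auto simp: distinct_conv_nth)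
  then obtain i j where ij: "i < j" "j \<le> d" "P ! i = P ! j"
    by (metis nat_neq_iff)
  have "walk_from_to V E s (P ! j) (take (Suc i) P)"
    using geodesic_walk_prefix[OF assms, of i] ij by simp
  then have "j < length (take (Suc i) P)" by (rule geodesic_prefix_shortest[OF assms ij(2)])
  then show False using ij(1) by simp
qed

lemma geodesic_exchange_prefix:
  assumes "geodesic P" "Suc k \<le> d" "walk_from_to V E s c W" "length W = Suc k" "E c (P ! Suc k)"
  shows "geodesic (W @ drop (Suc k) P)"
proof -
  have "walk_from_to V E (P ! Suc k) t (drop (Suc k) P)"
    using walk_from_to_drop[of V E P "Suc k"] geodesicD[OF assms(1)] assms(2) by simp
  then show ?thesis
    using walk_from_to_append_edge[OF assms(3) _ assms(5)] assms(2,4) geodesicD(4)[OF assms(1)]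
    unfolding geodesic_def by simp
qed

lemma geodesic_righti:
  assumes "geodesic P"
  shows "righti P \<le> d" "P ! righti P = Max (set P)"
proof -
  have "P \<noteq> []" using geodesicD(4)[OF assms] by auto
  then show "righti P \<le> d" "P ! righti P = Max (set P)"
    using righti_less_length_nth[of P] geodesicD(4)[OF assms] by auto
qed

lemma geodesic_lefti:
  assumes "geodesic P"
  shows "lefti P \<le> d" "P ! lefti P = Min (set P)"
proof -
  have "P \<noteq> []" using geodesicD(4)[OF assms] by auto
  then show "lefti P \<le> d" "P ! lefti P = Min (set P)"
    using lefti_less_length_nth[of P] geodesicD(4)[OF assms] by auto
qed

lemma geodesic_Min_le_nth: "geodesic P \<Longrightarrow> i \<le> d \<Longrightarrow> Min (set P) \<le> P ! i"
  using geodesicD(4) by simp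

lemma geodesic_nth_le_Max: "geodesic P \<Longrightarrow> i \<le> d \<Longrightarrow> P ! i \<le> Max (set P)"
  using geodesicD(4) by simp

lemma geodesic_Min_le_s: "geodesic P \<Longrightarrow> Min (set P) \<le> s"
  using geodesic_Min_le_nth[of P 0] geodesicD(2) by simp

lemma geodesic_t_le_Max: "geodesic P \<Longrightarrow> t \<le> Max (set P)"
  using geodesic_nth_le_Max[of P d] geodesicD(3) by simp

lemma finite_Rs: "finite (Rs k)"
  by (rule finite_reach_within)

lemma s_in_Rs: "s \<in> Rs k"
  using s_in_V s_less_t by (simp add: start_in_reach_within)

lemma Min_Rs_in: "Min (Rs k) \<in> Rs k" and Max_Rs_in: "Max (Rs k) \<in> Rs k"
  using finite_Rs s_in_Rs by (auto intro: Min_in Max_in)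

lemma Rs_le_t: "v \<in> Rs k \<Longrightarrow> v \<le> t"
  using reach_within_subset[of V E "{v. v \<le> t}" s k] by auto

lemma geodesic_nth_eq_iff:
  assumes "geodesic P" "i \<le> d" "j \<le> d"
  shows "P ! i = P ! j \<longleftrightarrow> i = j"
  using nth_eq_iff_index_eq[OF geodesic_distinct[OF assms(1)]] geodesicD(4)[OF assms(1)] assms(2,3)
  by simp

lemma geodesic_nth_le_t_before_righti:
  assumes P: "geodesic P" and j: "j < righti P"
  shows "P ! j \<le> t"
proof (rule ccontr)
  assume "\<not> P ! j \<le> t"
  define m where "m = righti P"
  note g = geodesicD[OF P]
  have m: "m \<le> d" "P ! m = Max (set P)" and jm: "j < m" using geodesic_righti[OF P] j by (auto simp: m_def)
  have neq: "i \<noteq> i' \<Longrightarrow> i \<le> d \<Longrightarrow> i' \<le> d \<Longrightarrow> P ! i \<noteq> P ! i'" for i i'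
    using geodesic_nth_eq_iff[OF P] by blast
  have "P ! 0 \<le> t" using g(2) s_less_t by simp
  then obtain a where a: "a < j" "P ! a \<le> t" "\<not> P ! Suc a \<le> t"
    using exists_crossing_step[where g = "(!) P" and Q = "\<lambda>v. v \<le> t", OF _ \<open>\<not> P ! j \<le> t\<close>]
    by auto
  have lo: "P ! a < t" using a(2) neq[of a d] g(3) a(1) jm m(1) by fastforce
  have hi: "t < P ! Suc a" using a(3) by simp
  have hiM: "P ! Suc a < P ! m"
    using geodesic_nth_le_Max[OF P, of "Suc a"] neq[of "Suc a" m] a(1) jm m by fastforce
  have "\<not> (P ! a < P ! m \<and> P ! m < P ! Suc a)" "P ! a < P ! d \<and> P ! d < P ! Suc a"
    using hiM lo hi g(3) by auto
  then obtain c where c: "m \<le> c" "c < d" "\<not> (P ! a < P ! c \<and> P ! c < P ! Suc a)"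
      "P ! a < P ! Suc c" "P ! Suc c < P ! Suc a"
    using exists_crossing_step[where g = "(!) P" and Q = "\<lambda>v. \<not> (P ! a < v \<and> v < P ! Suc a)"] m(1)
    by blast
  have eA: "E (P ! a) (P ! Suc a)" and eC: "E (P ! Suc c) (P ! c)"
    using walk_edge[OF g(1), of a] walk_edge[OF g(1), of c] a(1) jm m(1) c(2) g(4) sym by auto
  consider "P ! Suc a < P ! c" | "P ! c < P ! a"
    using c(3) neq[of c a] neq[of c "Suc a"] a(1) jm c(1,2) by fastforce
  then show False
  proof cases
    case 1
    then have "E (P ! a) (P ! c)" using crossing_edge_above[OF c(4,5) eA eC] by blast
    then show False using geodesic_no_shortcut[OF P, of a c] a(1) jm c(1,2) by simp
  next
    case 2
    then have "E (P ! Suc a) (P ! c)" using crossing_edge_below[OF c(4,5) eA eC] sym by blast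
    moreover have "c \<noteq> m" using 2 hiM lo hi by auto
    ultimately show False using geodesic_no_shortcut[OF P, of "Suc a" c] a(1) jm c(1,2) by simp
  qed
qed

lemma geodesic_nth_in_Rs_before_righti:
  assumes P: "geodesic P" and j: "j < righti P"
  shows "P ! j \<in> Rs j"
proof -
  have jd: "j \<le> d" using geodesic_righti(1)[OF P] j by simp
  have "set (take (Suc j) P) \<subseteq> {v. v \<le> t}"
    using geodesic_nth_le_t_before_righti[OF P] j by (auto simp: in_set_conv_nth)
  then show ?thesis
    using walk_nth_in_reach_within[OF geodesic_walk_prefix[OF P jd], of "{v. v \<le> t}" j j]
      geodesicD(4)[OF P] jd by simp
qed

lemma s_not_inside_edge_after_lefti:
  assumes P: "geodesic P" and e: "lefti P < e" "e < d" and inside: "P ! e < s" "s < P ! Suc e"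
  shows False
proof -
  define l where "l = lefti P"
  note g = geodesicD[OF P]
  have l: "l \<le> d" "P ! l = Min (set P)" and le: "l < e" using geodesic_lefti[OF P] e by (auto simp: l_def)
  have neq: "i \<noteq> i' \<Longrightarrow> i \<le> d \<Longrightarrow> i' \<le> d \<Longrightarrow> P ! i \<noteq> P ! i'" for i i'
    using geodesic_nth_eq_iff[OF P] by blast
  have "P ! l < P ! e" using geodesic_Min_le_nth[OF P, of e] neq[of l e] l le e(2) by fastforce
  then have "P ! e < P ! 0 \<and> P ! 0 < P ! Suc e" "\<not> (P ! e < P ! l \<and> P ! l < P ! Suc e)"
    using inside g(2) by auto
  then obtain h where h: "h < l" "P ! e < P ! h" "P ! h < P ! Suc e"
      "\<not> (P ! e < P ! Suc h \<and> P ! Suc h < P ! Suc e)"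
    using exists_crossing_step[where g = "(!) P" and Q = "\<lambda>v. P ! e < v \<and> v < P ! Suc e" and a = 0]
    by auto
  have eE: "E (P ! e) (P ! Suc e)" and eH: "E (P ! h) (P ! Suc h)"
    using walk_edge[OF g(1), of e] walk_edge[OF g(1), of h] h(1) le e(2) g(4) by auto
  consider "P ! Suc e < P ! Suc h" | "P ! Suc h < P ! e"
    using h(4) neq[of "Suc h" e] neq[of "Suc h" "Suc e"] h(1) le e(2) by fastforce
  then show False
  proof cases
    case 1
    then have "E (P ! Suc h) (P ! e)" using crossing_edge_above[OF h(2,3) eE eH] sym by blast
    then have "e \<le> Suc (Suc h)" using geodesic_no_shortcut[OF P, of "Suc h" e] h(1) le e(2) by simp
    then have "Suc h = l" using h(1) le by simp
    then show False using 1 geodesic_Min_le_nth[OF P, of e] l(2) e(2) inside by simp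
  next
    case 2
    then have "E (P ! Suc h) (P ! Suc e)" using crossing_edge_below[OF h(2,3) eE eH] by blast
    then show False using geodesic_no_shortcut[OF P, of "Suc h" "Suc e"] h(1) le e(2) by simp
  qed
qed

lemma early_edge_across_geodesic:
  assumes P: "geodesic P" and ab: "a \<le> b" "b \<le> d"
    and W: "walk_from_to V E s w W" "length W \<le> Suc a"
    and Z: "walk_from_to V E s z Z" "length Z \<le> a"
    and wz: "E w z" "w < P ! a" "P ! a < z" "z < P ! b"
  shows "length W = Suc a \<and> a < d \<and> E w (P ! Suc a)"
proof -
  note g = geodesicD[OF P]
  have "\<not> (w < P ! b \<and> P ! b < z)" using wz(4) by auto
  then obtain h where h: "a \<le> h" "h < b" "w < P ! h" "P ! h < z" "\<not> (w < P ! Suc h \<and> P ! Suc h < z)"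
    using exists_crossing_step[where g = "(!) P" and Q = "\<lambda>v. w < v \<and> v < z", of a b] wz(2,3) ab(1)
    by auto
  have hd: "Suc h \<le> d" using h(2) ab(2) by simp
  have eh: "E (P ! h) (P ! Suc h)" using walk_edge[OF g(1), of h] hd g(4) by simp
  have "P ! Suc h \<noteq> w" using geodesic_prefix_shortest[OF P hd, of W] W h(1) by auto
  moreover have "P ! Suc h \<noteq> z" using geodesic_prefix_shortest[OF P hd, of Z] Z h(1) by auto
  ultimately consider "z < P ! Suc h" | "P ! Suc h < w" using h(5) by fastforce
  then show ?thesis
  proof cases
    case 1
    then have adj: "E w (P ! Suc h)" using crossing_edge_above[OF h(3,4) wz(1) eh] by blast
    then have "Suc h \<le> length W" by (rule geodesic_prefix_shortest_adjacent[OF P hd W(1)])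
    then have "h = a" "length W = Suc a" using W(2) h(1) by auto
    then show ?thesis using adj hd by simp
  next
    case 2
    then have "E (P ! Suc h) z" using crossing_edge_below[OF h(3,4) wz(1) eh] by blast
    then show ?thesis using geodesic_prefix_shortest_adjacent[OF P hd Z(1)] Z(2) h(1) sym by fastforce
  qed
qed

lemma short_walk_into_edge_after_lefti:
  assumes P: "geodesic P" and e: "lefti P < e" "Suc e \<le> d"
    and W: "walk_from_to V E s w W" "length W \<le> Suc e" and inside: "P ! e < w" "w < P ! Suc e"
  shows "length W = Suc e \<and> P ! Suc e < W ! (e - 1) \<and> E w (W ! (e - 1))"
proof -
  note g = geodesicD[OF P]
  note wW = walk_from_to_nthD[OF W(1)]
  have "\<not> (P ! e < W ! 0 \<and> W ! 0 < P ! Suc e)"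
    using s_not_inside_edge_after_lefti[OF P e(1)] e(2) wW(3) by auto
  moreover have "P ! e < W ! (length W - 1) \<and> W ! (length W - 1) < P ! Suc e" using wW(4) inside by simp
  ultimately obtain j where j: "j < length W - 1" "\<not> (P ! e < W ! j \<and> W ! j < P ! Suc e)"
      "P ! e < W ! Suc j" "W ! Suc j < P ! Suc e"
    using exists_crossing_step[where g = "(!) W" and Q = "\<lambda>v. \<not> (P ! e < v \<and> v < P ! Suc e)" and a = 0]
    by auto
  have je: "Suc j \<le> e" using j(1) W(2) by simp
  have Wj: "walk_from_to V E s (W ! j) (take (Suc j) W)" "length (take (Suc j) W) = Suc j"
    using walk_from_to_take[OF wW(1), of j] wW(3) j(1) by auto
  have off_W: "W ! j \<noteq> P ! f" if "j < f" "f \<le> d" for f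
    using geodesic_prefix_shortest[OF P that(2), of "take (Suc j) W"] Wj that(1) by auto
  have "W ! j \<noteq> P ! e" "W ! j \<noteq> P ! Suc e" using off_W je e(2) by auto
  then consider "W ! j < P ! e" | "P ! Suc e < W ! j" using j(2) by fastforce
  moreover have eP: "E (P ! e) (P ! Suc e)" and eW: "E (W ! Suc j) (W ! j)"
    using walk_edge[OF g(1), of e] walk_edge[OF wW(1), of j] e(2) g(4) j(1) sym by auto
  ultimately show ?thesis
  proof cases
    case 1
    then have "E (W ! j) (P ! Suc e)" using crossing_edge_below[OF j(3,4) eP eW] by blast
    then show ?thesis using geodesic_prefix_shortest_adjacent[OF P e(2) Wj(1)] Wj(2) je by simp
  next
    case 2
    then have "E (W ! j) (P ! e)" using crossing_edge_above[OF j(3,4) eP eW] sym by blast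
    then have "e \<le> Suc j" using geodesic_prefix_shortest_adjacent[OF P _ Wj(1), of e] Wj(2) e(2) by simp
    then have "Suc j = e" "length W - 1 = Suc j" using je j(1) W(2) by auto
    then show ?thesis using 2 eW wW(4) by auto
  qed
qed

lemma Rs_le_nth_between_extremes:
  assumes P: "geodesic P" and li: "lefti P < i" and im: "i < righti P" and w: "w \<in> Rs i"
  shows "w \<le> P ! i"
proof (rule ccontr)
  assume "\<not> w \<le> P ! i"
  define m where "m = righti P"
  have m: "m \<le> d" "P ! m = Max (set P)" and im': "i < m" using geodesic_righti[OF P] im by (auto simp: m_def)
  obtain W where W: "walk_from_to V E s w W" "length W \<le> Suc i" "set W \<subseteq> {v. v \<le> t}"
    using w unfolding reach_within_def by blast
  have off_P: "P ! f \<noteq> w" if "i < f" "f \<le> d" for f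
    using geodesic_nth_notin_reach_within[OF P that(2,1)] w by auto
  have "w < P ! m" using off_P[of m] im' m Rs_le_t[OF w] geodesic_t_le_Max[OF P] by fastforce
  moreover have "\<not> w < P ! i" using \<open>\<not> w \<le> P ! i\<close> by simp
  ultimately obtain e where e: "i \<le> e" "e < m" "\<not> w < P ! e" "w < P ! Suc e"
    using exists_crossing_step[where g = "(!) P" and Q = "\<lambda>v. \<not> w < v" and a = i and b = m] im'
    by auto
  have ed: "Suc e \<le> d" using e(2) m(1) by simp
  have "P ! e < w" using off_P[of e] e(1,3) \<open>\<not> w \<le> P ! i\<close> ed by (cases "e = i") auto
  then have "length W = Suc e" and z: "P ! Suc e < W ! (e - 1)" "E w (W ! (e - 1))"
    using short_walk_into_edge_after_lefti[OF P _ ed W(1)] li e(1,4) W(2) by auto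
  then have ei: "e = i" using W(2) e(1) by simp
  have Z: "walk_from_to V E s (W ! (i - 1)) (take i W)" "length (take i W) \<le> i" "W ! (i - 1) \<le> t"
    using walk_from_to_take[OF walk_from_to_nthD(1)[OF W(1)], of "i - 1"] walk_from_to_nthD(3)[OF W(1)]
      W(3) li \<open>length W = Suc e\<close> ei by (auto simp: subset_iff)
  have "W ! (i - 1) \<noteq> P ! m" using geodesic_prefix_shortest[OF P m(1), of "take i W"] Z(1,2) im' by auto
  then have "W ! (i - 1) < P ! m" using Z(3) geodesic_t_le_Max[OF P] m(2) by simp
  moreover have "P ! Suc i < W ! (i - 1)" "E w (W ! (i - 1))" "w < P ! Suc i" using z e(4) ei by auto
  ultimately have "length W = Suc (Suc i) \<and> Suc i < d \<and> E w (P ! Suc (Suc i))"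
    using Z(2) W(2) im' by (intro early_edge_across_geodesic[OF P _ m(1) W(1) _ Z(1)]) simp_all
  then show False using W(2) by simp
qed

lemma nth_eq_Max_Rs_between_extremes:
  assumes "geodesic P" "lefti P < i" "i < righti P"
  shows "P ! i = Max (Rs i)"
  using Max_eqI[OF finite_Rs Rs_le_nth_between_extremes[OF assms]
      geodesic_nth_in_Rs_before_righti[OF assms(1,3)]] by simp

lemma Rs_below_Min_adjacent:
  assumes P: "geodesic P" and k: "k \<le> lefti P" and w: "w \<in> Rs k" and wL: "w < Min (set P)"
  shows "k = lefti P \<and> k < d \<and> E w (P ! Suc k)"
proof -
  define l where "l = lefti P"
  note g = geodesicD[OF P]
  have l: "l \<le> d" "P ! l = Min (set P)" and kl: "k \<le> l" using geodesic_lefti[OF P] k by (auto simp: l_def)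
  obtain W where W: "walk_from_to V E s w W" "length W \<le> Suc k" "set W \<subseteq> {v. v \<le> t}"
    using w unfolding reach_within_def by blast
  note wW = walk_from_to_nthD[OF W(1)]
  have "P ! l \<le> W ! 0" "\<not> P ! l \<le> W ! (length W - 1)"
    using geodesic_Min_le_s[OF P] l(2) wW(3,4) wL by auto
  then obtain j where j: "j < length W - 1" "P ! l \<le> W ! j" "W ! Suc j < P ! l"
    using exists_crossing_step[where g = "(!) W" and Q = "\<lambda>v. P ! l \<le> v", OF _ _ le0]
    by (metis not_le)
  have jl: "Suc j \<le> l" using j(1) W(2) kl by simp
  have Wj: "walk_from_to V E s (W ! j) (take (Suc j) W)" "length (take (Suc j) W) = Suc j"
    and WSj: "walk_from_to V E s (W ! Suc j) (take (Suc (Suc j)) W)"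
      "length (take (Suc (Suc j)) W) = Suc (Suc j)"
    using walk_from_to_take[OF wW(1), of j] walk_from_to_take[OF wW(1), of "Suc j"] wW(3) j(1) by auto
  have off_W: "W ! j \<noteq> P ! f" if "j < f" "f \<le> d" for f
    using geodesic_prefix_shortest[OF P that(2), of "take (Suc j) W"] Wj that(1) by auto
  have "W ! j \<in> set W" using j(1) by simp
  then have zt: "W ! j < P ! d" using off_W[of d] W(3) jl l(1) g(3) by fastforce
  have lz: "P ! l < W ! j" using off_W[of l] j(2) jl l(1) by fastforce
  have eW: "E (W ! Suc j) (W ! j)" using walk_edge[OF wW(1), of j] j(1) sym by simp
  have "length (take (Suc (Suc j)) W) = Suc l \<and> l < d \<and> E (W ! Suc j) (P ! Suc l)"
    by (rule early_edge_across_geodesic[OF P l(1) order.refl WSj(1) _ Wj(1) _ eW j(3) lz zt])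
      (use WSj(2) Wj(2) jl in simp_all)
  then have "Suc j = l" "l < d" and adj: "E (W ! Suc j) (P ! Suc l)" using WSj(2) by auto
  then have "k = l" "length W - 1 = Suc j" using j(1) W(2) kl by auto
  then have "W ! Suc j = w" using wW(4) by simp
  then show ?thesis using adj \<open>k = l\<close> \<open>l < d\<close> by (simp add: l_def)
qed

lemma Min_le_Rs_before_lefti:
  assumes "geodesic P" "k < lefti P" "w \<in> Rs k"
  shows "Min (set P) \<le> w"
  using Rs_below_Min_adjacent[OF assms(1) _ assms(3)] assms(2) by fastforce

section \<open>Extremal shortest paths\<close>

text \<open>Each clause is the mirror image of the other, so extremality is invariant under
  reversing the order and the path.\<close>

definition extremal :: "'a list \<Rightarrow> bool" where
  "extremal P \<longleftrightarrow> geodesic P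
     \<and> (\<forall>Q. geodesic Q \<and> Max (set Q) = Max (set P) \<longrightarrow> Min (set P) \<le> Min (set Q))
     \<and> (\<forall>Q. geodesic Q \<and> Min (set Q) = Min (set P) \<longrightarrow> Max (set Q) \<le> Max (set P))"

lemma extremal_exists: "\<exists>P. extremal P"
proof -
  define G where "G = {P. geodesic P}"
  have "G \<subseteq> {xs. set xs \<subseteq> V \<and> length xs = Suc d}"
    unfolding G_def geodesic_def walk_from_to_def walk_def by auto
  then have finG: "finite G" using finite_lists_length_eq[OF finite_V] by (rule finite_subset)
  have "G \<noteq> {}" using geodesic_exists by (simp add: G_def)
  define L where "L = Min ((\<lambda>P. Min (set P)) ` G)"
  define G1 where "G1 = {P \<in> G. Min (set P) = L}"
  have "L \<in> (\<lambda>P. Min (set P)) ` G" unfolding L_def using finG \<open>G \<noteq> {}\<close> by (intro Min_in) simp_all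
  then have "G1 \<noteq> {}" unfolding G1_def by blast
  moreover have finG1: "finite G1" using finG by (simp add: G1_def)
  ultimately have "Max ((\<lambda>P. Max (set P)) ` G1) \<in> (\<lambda>P. Max (set P)) ` G1" by (intro Max_in) simp_all
  then obtain P where P: "P \<in> G1" "Max (set P) = Max ((\<lambda>P. Max (set P)) ` G1)" by force
  have "Min (set P) \<le> Min (set Q)" if "geodesic Q" for Q
  proof -
    have "Min (set P) = L" using P(1) by (simp add: G1_def)
    also have "L \<le> Min (set Q)" unfolding L_def using finG that by (simp add: G_def)
    finally show ?thesis .
  qed
  moreover have "Max (set Q) \<le> Max (set P)" if "geodesic Q" "Min (set Q) = Min (set P)" for Q
  proof -
    have "Q \<in> G1" using P(1) that by (simp add: G1_def G_def)
    then show ?thesis unfolding P(2) using finG1 by simp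
  qed
  moreover have "geodesic P" using P(1) by (simp add: G1_def G_def)
  ultimately show ?thesis unfolding extremal_def by blast
qed

lemma extremal_if_same_extremes:
  "extremal P \<Longrightarrow> geodesic Q \<Longrightarrow> Min (set Q) = Min (set P) \<Longrightarrow> Max (set Q) = Max (set P) \<Longrightarrow> extremal Q"
  unfolding extremal_def by simp

lemma geodesic_extremes_eqI:
  assumes Q: "geodesic Q" and "a \<le> d" "b \<le> d" "Q ! a = L" "Q ! b = M"
    and bounds: "\<And>i. i \<le> d \<Longrightarrow> L \<le> Q ! i \<and> Q ! i \<le> M"
  shows "Min (set Q) = L" "Max (set Q) = M" "lefti Q = a" "righti Q = b"
proof -
  have len: "length Q = Suc d" using geodesicD(4)[OF Q] .
  have "L \<le> v \<and> v \<le> M" if "v \<in> set Q" for v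
    using that bounds len by (auto simp: in_set_conv_nth less_Suc_eq_le)
  moreover have "L \<in> set Q" "M \<in> set Q" using assms(2-5) len by (metis le_imp_less_Suc nth_mem)+
  ultimately show mn: "Min (set Q) = L" and mx: "Max (set Q) = M"
    by (simp_all add: Min_eqI Max_eqI)
  show "lefti Q = a" "righti Q = b"
    using lefti_eqI[OF geodesic_distinct[OF Q], of a] righti_eqI[OF geodesic_distinct[OF Q], of b]
      assms(2-5) mn mx len by auto
qed

lemma Max_exchange_prefix:
  assumes P: "geodesic P" and W: "set W \<subseteq> {v. v \<le> t}" and k: "k < righti P"
  shows "Max (set (W @ drop (Suc k) P)) = Max (set P)"
proof (rule Max_eqI)
  show "v \<le> Max (set P)" if "v \<in> set (W @ drop (Suc k) P)" for v
  proof (cases "v \<in> set W")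
    case True
    then show ?thesis using W geodesic_t_le_Max[OF P] by auto
  next
    case False
    then have "v \<in> set P" using that by (auto dest: in_set_dropD)
    then show ?thesis by simp
  qed
  have "drop (Suc k) P ! (righti P - Suc k) = P ! righti P"
    "righti P - Suc k < length (drop (Suc k) P)"
    using geodesic_righti(1)[OF P] k geodesicD(4)[OF P] by auto
  then have "P ! righti P \<in> set (drop (Suc k) P)" by (metis nth_mem)
  then show "Max (set P) \<in> set (W @ drop (Suc k) P)" using geodesic_righti(2)[OF P] by simp
qed simp

lemma nth_lefti_eq_Min_Rs:
  assumes P: "extremal P" and lm: "lefti P < righti P"
  shows "P ! lefti P = Min (Rs (lefti P))"
proof (rule Min_eqI[symmetric, OF finite_Rs])
  define l where "l = lefti P"
  have g: "geodesic P" using P by (simp add: extremal_def)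
  show "P ! lefti P \<in> Rs (lefti P)" using geodesic_nth_in_Rs_before_righti[OF g lm] .
  fix w assume w: "w \<in> Rs (lefti P)"
  show "P ! lefti P \<le> w"
  proof (rule ccontr)
    assume "\<not> P ! lefti P \<le> w"
    then have wL: "w < Min (set P)" using geodesic_lefti(2)[OF g] by simp
    then have ld: "l < d" and adj: "E w (P ! Suc l)"
      using Rs_below_Min_adjacent[OF g order.refl w] by (auto simp: l_def)
    obtain W where W: "walk_from_to V E s w W" "length W \<le> Suc l" "set W \<subseteq> {v. v \<le> t}"
      using w unfolding reach_within_def l_def by blast
    have ld': "Suc l \<le> d" using ld by simp
    have "Suc l \<le> length W" by (rule geodesic_prefix_shortest_adjacent[OF g ld' W(1) adj])
    then have "length W = Suc l" using W(2) by simp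
    then have P': "geodesic (W @ drop (Suc l) P)" by (rule geodesic_exchange_prefix[OF g ld' W(1) _ adj])
    have "Max (set (W @ drop (Suc l) P)) = Max (set P)"
      using Max_exchange_prefix[OF g W(3)] lm by (simp add: l_def)
    moreover have "w \<in> set (W @ drop (Suc l) P)" using W(1) by (auto simp: walk_from_to_def walk_def)
    then have "Min (set (W @ drop (Suc l) P)) \<le> w" by (intro Min_le) simp_all
    then have "Min (set (W @ drop (Suc l) P)) < Min (set P)" using wL by simp
    ultimately show False using P P' unfolding extremal_def by (metis not_le)
  qed
qed

lemma exchange_prefix_to_Rs_extreme:
  assumes P: "geodesic P" and k: "Suc k \<le> d" and Pk: "P ! k \<in> Rs k"
    and outside: "P ! Suc k < Min (Rs k) \<or> Max (Rs k) < P ! Suc k"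
  obtains c W where "c \<in> {Min (Rs k), Max (Rs k)}" "walk_from_to V E s c W" "length W = Suc k"
    "set W \<subseteq> {v. v \<le> t}" "geodesic (W @ drop (Suc k) P)"
proof -
  have "E (P ! k) (P ! Suc k)" using walk_edge[OF geodesicD(1)[OF P], of k] k geodesicD(4)[OF P] by simp
  moreover have "P ! Suc k \<notin> reach_within V E UNIV s k"
    using geodesic_nth_notin_reach_within[OF P k] by simp
  ultimately have "E (Min (Rs k)) (P ! Suc k) \<or> E (Max (Rs k)) (P ! Suc k)"
    using adjacent_extreme_of_reach_within[OF Pk _ outside] by blast
  then obtain c where c: "c \<in> {Min (Rs k), Max (Rs k)}" "E c (P ! Suc k)" by blast
  then have "c \<in> Rs k" using Min_Rs_in Max_Rs_in by blast
  then obtain W where W: "walk_from_to V E s c W" "length W \<le> Suc k" "set W \<subseteq> {v. v \<le> t}"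
    unfolding reach_within_def by blast
  have "Suc k \<le> length W" by (rule geodesic_prefix_shortest_adjacent[OF P k W(1) c(2)])
  then have "length W = Suc k" using W(2) by simp
  then show thesis using that[OF c(1) W(1) _ W(3)] geodesic_exchange_prefix[OF P k W(1) _ c(2)] by blast
qed

lemma Rs_Suc_extreme_outside_Rs:
  assumes "c \<in> {Min (Rs (Suc k)), Max (Rs (Suc k))}" "c \<notin> Rs k"
  shows "c < Min (Rs k) \<or> Max (Rs k) < c"
proof -
  have sub: "Rs k \<subseteq> Rs (Suc k)" by (rule reach_within_mono) simp_all
  have ne: "Rs k \<noteq> {}" using s_in_Rs by blast
  have "Min (Rs (Suc k)) \<le> Min (Rs k)" "Max (Rs k) \<le> Max (Rs (Suc k))"
    using Min_antimono[OF sub ne finite_Rs] Max_mono[OF sub ne finite_Rs] by auto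
  then show ?thesis using assms Min_Rs_in[of k] Max_Rs_in[of k] by (auto simp: order.order_iff_strict)
qed

lemma geodesic_prefix_to_Rs_extremes:
  assumes "geodesic P" "Suc k \<le> d" "P ! k \<in> Rs k" "P ! Suc k < Min (Rs k) \<or> Max (Rs k) < P ! Suc k"
  shows "\<exists>Q. geodesic Q \<and> drop (Suc k) Q = drop (Suc k) P \<and> (\<forall>i \<le> k. Q ! i \<in> {Min (Rs i), Max (Rs i)})"
  using assms
proof (induction k arbitrary: P)
  case 0
  then obtain c W where cW: "c \<in> {Min (Rs 0), Max (Rs 0)}" "walk_from_to V E s c W" "length W = Suc 0"
      "set W \<subseteq> {v. v \<le> t}" "geodesic (W @ drop (Suc 0) P)"
    by (rule exchange_prefix_to_Rs_extreme)
  then have "W ! 0 = c" using walk_from_to_nthD(4)[OF cW(2)] by simp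
  then show ?case using cW by (intro exI[of _ "W @ drop (Suc 0) P"]) (auto simp: nth_append)
next
  case (Suc k)
  from Suc.prems obtain c W where cW: "c \<in> {Min (Rs (Suc k)), Max (Rs (Suc k))}" "walk_from_to V E s c W"
      "length W = Suc (Suc k)" "set W \<subseteq> {v. v \<le> t}" "geodesic (W @ drop (Suc (Suc k)) P)"
    by (rule exchange_prefix_to_Rs_extreme)
  define P1 where "P1 = W @ drop (Suc (Suc k)) P"
  have P1: "geodesic P1" using cW(5) by (simp add: P1_def)
  note wW = walk_from_to_nthD[OF cW(2)]
  have P1c: "P1 ! Suc k = c" using wW(4) cW(3) by (simp add: P1_def nth_append)
  have "P1 ! k \<in> Rs k"
    using walk_nth_in_reach_within[OF cW(2,4), of k k] cW(3) by (simp add: P1_def nth_append)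
  moreover have "c \<notin> Rs k"
    using geodesic_nth_notin_reach_within[OF P1, of "Suc k" k] Suc.prems(2) P1c by simp
  ultimately obtain Q where Q: "geodesic Q" "drop (Suc k) Q = drop (Suc k) P1"
      "\<forall>i\<le>k. Q ! i \<in> {Min (Rs i), Max (Rs i)}"
    using Suc.IH[OF P1] Suc.prems(2) Rs_Suc_extreme_outside_Rs[OF cW(1)] P1c by auto
  have "drop (Suc (Suc k)) Q = drop (Suc (Suc k)) P"
    using arg_cong[OF Q(2), of "drop 1"] cW(3) by (simp add: P1_def)
  moreover have "Q ! Suc k = c"
    using arg_cong[OF Q(2), of "\<lambda>xs. xs ! 0"] P1c geodesicD(4)[OF Q(1)] geodesicD(4)[OF P1] Suc.prems(2)
    by simp
  ultimately show ?case using Q(1,3) cW(1) by (intro exI[of _ Q]) (auto simp: le_Suc_eq)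
qed

lemma geodesic_prefix_before_extremes:
  assumes P: "geodesic P"
  defines "n \<equiv> min (lefti P) (righti P)"
  shows "\<exists>Q. geodesic Q \<and> drop n Q = drop n P \<and> (\<forall>i<n. Q ! i \<in> {Min (Rs i), Max (Rs i)})"
proof (cases n)
  case 0
  then show ?thesis using P by auto
next
  case (Suc k)
  have n: "n \<le> lefti P" "n \<le> righti P" "n = lefti P \<or> n = righti P" by (auto simp: n_def)
  have kd: "Suc k \<le> d" using n(1) geodesic_lefti(1)[OF P] Suc by simp
  have "P ! k \<in> Rs k" using geodesic_nth_in_Rs_before_righti[OF P] n(2) Suc by simp
  moreover have "P ! Suc k < Min (Rs k) \<or> Max (Rs k) < P ! Suc k"
  proof -
    have "Min (set P) \<le> Min (Rs k)" using Min_le_Rs_before_lefti[OF P _ Min_Rs_in] n(1) Suc by simp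
    moreover have "Max (Rs k) \<le> Max (set P)" using Rs_le_t[OF Max_Rs_in[of k]] geodesic_t_le_Max[OF P] by simp
    moreover have "P ! Suc k \<noteq> Min (Rs k)" "P ! Suc k \<noteq> Max (Rs k)"
      using geodesic_nth_notin_reach_within[OF P kd, of k] Min_Rs_in[of k] Max_Rs_in[of k] by auto
    ultimately show ?thesis
      using n(3) Suc geodesic_lefti(2)[OF P] geodesic_righti(2)[OF P] by auto
  qed
  ultimately show ?thesis
    using geodesic_prefix_to_Rs_extremes[OF P kd] Suc by (simp add: less_Suc_eq_le)
qed

lemma extremal_exchange_prefix_before_extremes:
  assumes P: "extremal P" and Q: "geodesic Q" and n: "n \<le> lefti P" "n \<le> righti P"
    and agree: "drop n Q = drop n P" and prefix: "\<And>i. i < n \<Longrightarrow> Q ! i \<in> Rs i"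
  shows "extremal Q \<and> lefti Q = lefti P \<and> righti Q = righti P"
proof -
  have g: "geodesic P" using P by (simp add: extremal_def)
  have eq: "Q ! i = P ! i" if "n \<le> i" "i \<le> d" for i
    using nth_eq_if_drop_eq[OF agree that(1)] that(2) geodesicD(4)[OF Q] by simp
  have "Min (set P) \<le> Q ! i \<and> Q ! i \<le> Max (set P)" if "i \<le> d" for i
  proof (cases "i < n")
    case True
    then show ?thesis
      using Min_le_Rs_before_lefti[OF g _ prefix] Rs_le_t[OF prefix] geodesic_t_le_Max[OF g] n(1)
      by fastforce
  next
    case False
    then show ?thesis using eq[of i] that geodesic_Min_le_nth[OF g] geodesic_nth_le_Max[OF g] by simp
  qed
  moreover have "Q ! lefti P = Min (set P)" "Q ! righti P = Max (set P)"
    using eq n geodesic_lefti[OF g] geodesic_righti[OF g] by auto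
  ultimately have "Min (set Q) = Min (set P)" "Max (set Q) = Max (set P)"
    "lefti Q = lefti P" "righti Q = righti P"
    using geodesic_extremes_eqI[OF Q geodesic_lefti(1)[OF g] geodesic_righti(1)[OF g]] by blast+
  then show ?thesis using extremal_if_same_extremes[OF P Q] by simp
qed

lemma extremal_s_side:
  assumes P: "extremal P"
  defines "n \<equiv> min (lefti P) (righti P)"
  shows "\<exists>Q. extremal Q \<and> lefti Q = lefti P \<and> righti Q = righti P \<and> drop n Q = drop n P \<and>
    (\<forall>i < righti Q. Q ! i \<in> {Min (Rs i), Max (Rs i)})"
proof -
  have g: "geodesic P" using P by (simp add: extremal_def)
  obtain Q where Q: "geodesic Q" "drop n Q = drop n P" "\<forall>i<n. Q ! i \<in> {Min (Rs i), Max (Rs i)}"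
    using geodesic_prefix_before_extremes[OF g] unfolding n_def by blast
  have "Q ! i \<in> Rs i" if "i < n" for i using Q(3) that Min_Rs_in[of i] Max_Rs_in[of i] by auto
  then have Q': "extremal Q" "lefti Q = lefti P" "righti Q = righti P"
    using extremal_exchange_prefix_before_extremes[OF P Q(1) _ _ Q(2)] by (auto simp: n_def)
  have "Q ! i \<in> {Min (Rs i), Max (Rs i)}" if i: "i < righti Q" for i
  proof (cases "i < n")
    case True
    then show ?thesis using Q(3) by blast
  next
    case False
    then have "lefti Q \<le> i" "lefti Q < righti Q" using i Q'(2,3) by (auto simp: n_def)
    then consider "i = lefti Q" | "lefti Q < i" by linarith
    then show ?thesis
      using nth_lefti_eq_Min_Rs[OF Q'(1)] nth_eq_Max_Rs_between_extremes[OF Q(1) _ i]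
        \<open>lefti Q < righti Q\<close> by cases auto
  qed
  then show ?thesis using Q(2) Q' by blast
qed

section \<open>Symmetry between \<open>s\<close> and \<open>t\<close>\<close>

abbreviation Rt :: "nat \<Rightarrow> 'a set" where
  "Rt k \<equiv> reach_within V E {v. s \<le> v} t k"

lemma X_graph_st_dual: "X_graph_st (dual ` V) (dual_adj E) (dual t) (dual s)"
proof unfold_locales
  show "simple_graph (dual ` V) (dual_adj E)" using simple_graph_dual[OF simple] .
  show "X_property (dual ` V) (dual_adj E)" using X_property_dual[OF simple X] .
  show "dual t \<in> dual ` V" "dual s \<in> dual ` V" "dual t < dual s" using s_in_V t_in_V s_less_t by auto
  obtain xs where "walk_from_to V E s t xs" using connected by blast
  then show "\<exists>xs. walk_from_to (dual ` V) (dual_adj E) (dual t) (dual s) xs"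
    using walk_from_to_dual_rev_iff[where E = E, OF sym] by blast
qed

lemma dist_dual: "dist (dual ` V) (dual_adj E) (dual t) (dual s) = d"
  by (rule dist_dual_rev[OF sym])

lemma dual_Rs_eq_Rt: "reach_within (dual ` V) (dual_adj E) {v. v \<le> dual s} (dual t) k = dual ` Rt k"
proof -
  have "{v. v \<le> dual s} = dual ` {v. s \<le> v}"
    by (auto simp: image_iff dual_less_eq_iff) (metis dual_undual)
  then show ?thesis by (simp add: reach_within_dual)
qed

lemma Min_dual_Rt: "Min (dual ` Rt k) = dual (Max (Rt k))"
  and Max_dual_Rt: "Max (dual ` Rt k) = dual (Min (Rt k))"
proof -
  have "t \<in> Rt k" using t_in_V s_less_t by (simp add: start_in_reach_within)
  then show "Min (dual ` Rt k) = dual (Max (Rt k))" "Max (dual ` Rt k) = dual (Min (Rt k))"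
    using Min_dual_image[OF finite_reach_within] Max_dual_image[OF finite_reach_within] by blast+
qed

lemma geodesic_dual_iff:
  "X_graph_st.geodesic (dual ` V) (dual_adj E) (dual t) (dual s) (map dual (rev P)) \<longleftrightarrow> geodesic P"
proof -
  interpret D: X_graph_st "dual ` V" "dual_adj E" "dual t" "dual s" by (rule X_graph_st_dual)
  show ?thesis unfolding D.geodesic_def geodesic_def dist_dual
    using walk_from_to_dual_rev_iff[where E = E, OF sym] by simp
qed

lemma nth_map_dual_rev: "length P = Suc d \<Longrightarrow> i \<le> d \<Longrightarrow> map dual (rev P) ! i = dual (P ! (d - i))"
  by (simp add: rev_nth)

lemma dual_geodesicE:
  assumes "X_graph_st.geodesic (dual ` V) (dual_adj E) (dual t) (dual s) Q'"
  obtains Q where "geodesic Q" "Q' = map dual (rev Q)"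
  using assms geodesic_dual_iff dual_rev_undual by metis

lemma extremal_dual_iff:
  "X_graph_st.extremal (dual ` V) (dual_adj E) (dual t) (dual s) (map dual (rev P)) \<longleftrightarrow> extremal P"
proof -
  interpret D: X_graph_st "dual ` V" "dual_adj E" "dual t" "dual s" by (rule X_graph_st_dual)
  have Min_dual_set: "Min (dual ` set Q) = dual (Max (set Q))"
    and Max_dual_set: "Max (dual ` set Q) = dual (Min (set Q))" if "geodesic Q" for Q
  proof -
    have "set Q \<noteq> {}" using geodesicD(4)[OF that] by (cases Q) auto
    then show "Min (dual ` set Q) = dual (Max (set Q))" "Max (dual ` set Q) = dual (Min (set Q))"
      by (simp_all add: Min_dual_image Max_dual_image)
  qed
  show ?thesis
  proof
    assume DP: "D.extremal (map dual (rev P))"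
    then have P: "geodesic P" using geodesic_dual_iff by (simp add: D.extremal_def)
    have "Min (set P) \<le> Min (set Q)" if "geodesic Q" "Max (set Q) = Max (set P)" for Q
      using DP[unfolded D.extremal_def] that P geodesic_dual_iff[of Q]
      by (auto simp: Min_dual_set Max_dual_set)
    moreover have "Max (set Q) \<le> Max (set P)" if "geodesic Q" "Min (set Q) = Min (set P)" for Q
      using DP[unfolded D.extremal_def] that P geodesic_dual_iff[of Q]
      by (auto simp: Min_dual_set Max_dual_set)
    ultimately show "extremal P" using P by (simp add: extremal_def)
  next
    assume P: "extremal P"
    then have g: "geodesic P" by (simp add: extremal_def)
    have "Min (set (map dual (rev P))) \<le> Min (set Q')"
      if "D.geodesic Q'" "Max (set Q') = Max (set (map dual (rev P)))" for Q'
      using that by (elim dual_geodesicE) (use P g in \<open>auto simp: extremal_def Min_dual_set Max_dual_set\<close>)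
    moreover have "Max (set Q') \<le> Max (set (map dual (rev P)))"
      if "D.geodesic Q'" "Min (set Q') = Min (set (map dual (rev P)))" for Q'
      using that by (elim dual_geodesicE) (use P g in \<open>auto simp: extremal_def Min_dual_set Max_dual_set\<close>)
    ultimately show "D.extremal (map dual (rev P))"
      using g geodesic_dual_iff by (simp add: D.extremal_def)
  qed
qed

lemma lefti_righti_dual_rev_geodesic:
  assumes "geodesic Q"
  shows "lefti (map dual (rev Q)) = d - righti Q" "righti (map dual (rev Q)) = d - lefti Q"
proof -
  have "Q \<noteq> []" using geodesicD(4)[OF assms] by auto
  then show "lefti (map dual (rev Q)) = d - righti Q" "righti (map dual (rev Q)) = d - lefti Q"
    using lefti_dual_rev[OF geodesic_distinct[OF assms]] righti_dual_rev[OF geodesic_distinct[OF assms]]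
      geodesicD(4)[OF assms] by simp_all
qed

lemma extremal_t_side:
  assumes P: "extremal P"
  defines "n \<equiv> max (lefti P) (righti P)"
  shows "\<exists>Q. extremal Q \<and> lefti Q = lefti P \<and> righti Q = righti P \<and> take (Suc n) Q = take (Suc n) P \<and>
    (\<forall>i. lefti Q < i \<and> i \<le> d \<longrightarrow> Q ! i \<in> {Max (Rt (d - i)), Min (Rt (d - i))})"
proof -
  interpret D: X_graph_st "dual ` V" "dual_adj E" "dual t" "dual s" by (rule X_graph_st_dual)
  have g: "geodesic P" using P by (simp add: extremal_def)
  have DP: "D.extremal (map dual (rev P))" using P extremal_dual_iff by simp
  have "min (d - righti P) (d - lefti P) = d - n"
    unfolding n_def by (cases "lefti P \<le> righti P") (simp_all add: max_def min_def)
  then obtain Q' where Q': "D.extremal Q'" "lefti Q' = d - righti P" "righti Q' = d - lefti P"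
      "drop (d - n) Q' = drop (d - n) (map dual (rev P))"
      "\<forall>i < righti Q'. Q' ! i \<in> {Min (D.Rs i), Max (D.Rs i)}"
    using D.extremal_s_side[OF DP] unfolding lefti_righti_dual_rev_geodesic[OF g] by metis
  then have "D.geodesic Q'" by (simp add: D.extremal_def)
  then obtain Q where Q: "geodesic Q" "Q' = map dual (rev Q)" by (rule dual_geodesicE)
  have ext: "extremal Q" using Q' Q extremal_dual_iff by simp
  have lm: "lefti P \<le> d" "righti P \<le> d" "lefti Q \<le> d" "righti Q \<le> d"
    using geodesic_lefti(1) geodesic_righti(1) g Q(1) by blast+
  then have ends: "lefti Q = lefti P" "righti Q = righti P"
    using Q'(2,3) lefti_righti_dual_rev_geodesic[OF Q(1)] Q(2) by auto
  have "map dual (rev (take (Suc n) Q)) = map dual (rev (take (Suc n) P))"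
    using Q'(4) Q(2) geodesicD(4)[OF Q(1)] geodesicD(4)[OF g] lm
    by (simp add: drop_map drop_rev n_def Suc_diff_le)
  then have "take (Suc n) Q = take (Suc n) P"
    by (metis map_undual_dual rev_rev_ident)
  moreover have "Q ! i \<in> {Max (Rt (d - i)), Min (Rt (d - i))}" if i: "lefti Q < i" "i \<le> d" for i
  proof -
    have "d - i < righti Q'" using Q'(3) ends i by simp
    then have "Q' ! (d - i) \<in> {Min (D.Rs (d - i)), Max (D.Rs (d - i))}" using Q'(5) by blast
    then show ?thesis
      using i Q(2) nth_map_dual_rev[OF geodesicD(4)[OF Q(1)], of "d - i"]
      by (auto simp: dist_dual dual_Rs_eq_Rt Min_dual_Rt Max_dual_Rt)
  qed
  ultimately show ?thesis using ext ends by blast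
qed

lemma exists_geodesic_alpha_beta:
  "\<exists>Q. geodesic Q \<and> (\<forall>i < righti Q. Q ! i \<in> {Min (Rs i), Max (Rs i)}) \<and>
     (\<forall>i. lefti Q < i \<and> i \<le> d \<longrightarrow> Q ! i \<in> {Max (Rt (d - i)), Min (Rt (d - i))})"
proof -
  obtain P where "extremal P" using extremal_exists by blast
  then obtain Q1 where Q1: "extremal Q1" "\<forall>i < righti Q1. Q1 ! i \<in> {Min (Rs i), Max (Rs i)}"
    using extremal_s_side by blast
  then obtain Q2 where Q2: "extremal Q2" "righti Q2 = righti Q1"
      "take (Suc (max (lefti Q1) (righti Q1))) Q2 = take (Suc (max (lefti Q1) (righti Q1))) Q1"
      "\<forall>i. lefti Q2 < i \<and> i \<le> d \<longrightarrow> Q2 ! i \<in> {Max (Rt (d - i)), Min (Rt (d - i))}"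
    using extremal_t_side by blast
  have "Q2 ! i = Q1 ! i" if "i < righti Q2" for i
    using nth_eq_if_take_eq[OF Q2(3)] that Q2(2) by simp
  then show ?thesis using Q1(2) Q2 by (intro exI[of _ Q2]) (auto simp: extremal_def)
qed

end

theorem lemma11:
  fixes V :: "'a::linorder set" and E :: "'a \<Rightarrow> 'a \<Rightarrow> bool" and s t :: 'a
  assumes "simple_graph V E"
    and "X_property V E"
    and "s \<in> V" and "t \<in> V" and "s < t"
    and "\<exists>xs. walk_from_to V E s t xs"
  shows "\<exists>P. walk_from_to V E s t P \<and> distinct P \<and> length P = Suc (dist V E s t) \<and>
     (\<forall>i < righti P. P ! i \<in> {alpha_s V E s t i, beta_s V E s t i}) \<and>
     (\<forall>i. lefti P < i \<and> i \<le> dist V E s t \<longrightarrow>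
        P ! i \<in> {alpha_t V E s t (dist V E s t - i), beta_t V E s t (dist V E s t - i)})"
proof -
  interpret X_graph_st V E s t
    using assms by unfold_locales
  obtain Q where "geodesic Q" "\<forall>i < righti Q. Q ! i \<in> {Min (Rs i), Max (Rs i)}"
    "\<forall>i. lefti Q < i \<and> i \<le> d \<longrightarrow> Q ! i \<in> {Max (Rt (d - i)), Min (Rt (d - i))}"
    using exists_geodesic_alpha_beta by blast
  then show ?thesis
    using geodesic_distinct unfolding geodesic_def alpha_s_def beta_s_def alpha_t_def beta_t_def
    by blast
qed

end
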